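(* Let $x_1,\dots,x_N$ be training data points, let $f(x,\theta)$ be a loss function differentiable in $\theta$, and fix $\theta_t$. Let $S_b\subseteq\{x_1,\dots,x_N\}$ be a random bucket, and conditionally on $S_b$ let $x_m$ be chosen uniformly at random from $S_b$. Let $p_i=\Pr(x_i\in S_b)>0$ and let $\mathbb{P}(x_i,x_j\in S_b)$ denote the probability that both $x_i$ and $x_j$ belong to $S_b$. For the estimator $$\mathrm{Est} = \frac{1}{N}\sum_{i=1}^N \mathbb{1}_{x_i\in S_b}\,\mathbb{1}_{(x_i = x_m \mid x_i\in S_b)}\,\frac{\nabla f(x_i,\theta_t)\cdot |S_b|}{p_i},$$ the trace of its covariance matrix $\Sigma(\mathrm{Est})$ equals $$\mathrm{Tr}(\Sigma(\mathrm{Est})) = \frac{1}{N^2}\sum_{i=1}^N \frac{\|\nabla f(x_i,\theta_t)\|_2^2\cdot \sum_{j=1}^N \frac{\mathbb{P}(x_i,x_j\in S_b)}{p_i}}{p_i} - \frac{1}{N^2}\Big\|\sum_{i=1}^N \nabla f(x_i,\theta_t)\Big\|_2^2.$$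
   Context: This is the LSH-sampled gradient estimator (LGD). Data points are preprocessed into locality-sensitive hash tables; at iteration $t$ the query (built from $\theta_t$) is hashed, a hash table is probed, and the matching non-empty bucket is $S_b$. The paper writes $p_i = cp(x_i,\theta_t)^K(1-cp(x_i,\theta_t)^K)^{l-1}$, with $cp$ the LSH collision probability, $K$ the number of concatenated hashes and $l$ the number of tables probed; in the statement $p_i$ denotes $\Pr(x_i\in S_b)$. $\mathbb{1}_{(x_i = x_m\mid x_i\in S_b)}$ is the indicator that $x_i$ is the element selected from the bucket. *)

theory Defs
  imports "HOL-Probability.Probability"
begin

definition trace_cov :: "'w pmf \<Rightarrow> ('w \<Rightarrow> 'v::euclidean_space) \<Rightarrow> real" where
  "trace_cov D X = (\<Sum>b\<in>Basis. measure_pmf.variance D (\<lambda>\<omega>. X \<omega> \<bullet> b))"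

definition bucket_then_uniform :: "nat set pmf \<Rightarrow> (nat set \<times> nat) pmf" where
  "bucket_then_uniform B = bind_pmf B (\<lambda>S. map_pmf (\<lambda>m. (S, m)) (pmf_of_set S))"

end

theory Submission
  imports Defs
begin

text \<open>Conditionally on the bucket S, the estimator equals |S| / (N p m) *R grad m with probability
  1/|S| for each m in S. Averaging over m first, its mean is E[sum over m in S of grad m / (N p m)],
  which is (1/N) * sum of grad m because m lies in S with probability p m. Its second moment is
  E[|S| * sum over m in S of |grad m|^2 / (N p m)^2], and writing |S| as the sum over j in S of 1
  turns this into a sum over pairs i, j in S, whose expectation brings in P(i, j in S). The trace
  of the covariance is the second moment minus the squared norm of the mean.\<close>

lemma norm_power2_eq_sum_Basis:
  fixes v :: "'v::euclidean_space"
  shows "(norm v)\<^sup>2 = (\<Sum>b\<in>Basis. (v \<bullet> b)\<^sup>2)"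
  unfolding power2_norm_eq_inner by (subst euclidean_inner) (simp add: power2_eq_square)

lemma trace_cov_eq_second_moment_minus_mean:
  fixes X :: "'w \<Rightarrow> 'v::euclidean_space"
  assumes "finite (set_pmf D)"
  shows "trace_cov D X = measure_pmf.expectation D (\<lambda>\<omega>. (norm (X \<omega>))\<^sup>2)
    - (norm (measure_pmf.expectation D X))\<^sup>2"
proof -
  have int: "integrable (measure_pmf D) g" for g :: "'w \<Rightarrow> 'c::{banach, second_countable_topology}"
    using assms by (rule integrable_measure_pmf_finite)
  have "measure_pmf.variance D (\<lambda>\<omega>. X \<omega> \<bullet> b)
      = measure_pmf.expectation D (\<lambda>\<omega>. (X \<omega> \<bullet> b)\<^sup>2) - (measure_pmf.expectation D X \<bullet> b)\<^sup>2" for b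
    using measure_pmf.variance_eq[OF int int, of "\<lambda>\<omega>. X \<omega> \<bullet> b"] integral_inner_left[OF int, of X b]
    by simp
  then have "trace_cov D X = (\<Sum>b\<in>Basis. measure_pmf.expectation D (\<lambda>\<omega>. (X \<omega> \<bullet> b)\<^sup>2))
      - (\<Sum>b\<in>Basis. (measure_pmf.expectation D X \<bullet> b)\<^sup>2)"
    unfolding trace_cov_def by (simp add: sum_subtractf)
  also have "\<dots> = measure_pmf.expectation D (\<lambda>\<omega>. (norm (X \<omega>))\<^sup>2)
      - (norm (measure_pmf.expectation D X))\<^sup>2"
    by (simp add: norm_power2_eq_sum_Basis int)
  finally show ?thesis .
qed

lemma expectation_pmf_of_set:
  fixes g :: "'a \<Rightarrow> 'b::{banach, second_countable_topology}"
  assumes "S \<noteq> {}" and "finite S"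
  shows "measure_pmf.expectation (pmf_of_set S) g = (\<Sum>m\<in>S. g m) /\<^sub>R real (card S)"
  using assms by (subst integral_measure_pmf[of S]) (auto simp: scaleR_sum_right divide_inverse_commute)

lemma expectation_sum_indicators:
  fixes J :: "'j set" and h :: "'j \<Rightarrow> 'b::{banach, second_countable_topology}"
  assumes "finite J"
  shows "measure_pmf.expectation M (\<lambda>\<omega>. \<Sum>j\<in>J. if \<omega> \<in> E j then h j else 0)
    = (\<Sum>j\<in>J. measure_pmf.prob M (E j) *\<^sub>R h j)"
proof -
  have "(\<lambda>\<omega>. \<Sum>j\<in>J. if \<omega> \<in> E j then h j else 0) = (\<lambda>\<omega>. \<Sum>j\<in>J. indicator (E j) \<omega> *\<^sub>R h j)"
    by (intro ext sum.cong) auto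
  then show ?thesis
    by (simp add: integral_sum measure_pmf.integrable_const_bound[where B=1])
qed

lemma expectation_sum_members:
  fixes h :: "'a \<Rightarrow> 'b::{banach, second_countable_topology}"
  assumes "finite I" and "\<And>S. S \<in> set_pmf B \<Longrightarrow> S \<subseteq> I"
  shows "measure_pmf.expectation B (\<lambda>S. \<Sum>i\<in>S. h i)
    = (\<Sum>i\<in>I. measure_pmf.prob B {S. i \<in> S} *\<^sub>R h i)"
proof -
  have "measure_pmf.expectation B (\<lambda>S. \<Sum>i\<in>S. h i)
      = measure_pmf.expectation B (\<lambda>S. \<Sum>i\<in>I. if S \<in> {S. i \<in> S} then h i else 0)"
    using assms by (intro integral_cong_AE AE_pmfI) (auto simp: sum.If_cases Int_absorb1)
  also have "\<dots> = (\<Sum>i\<in>I. measure_pmf.prob B {S. i \<in> S} *\<^sub>R h i)"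
    using assms(1) by (rule expectation_sum_indicators)
  finally show ?thesis .
qed

lemma expectation_sum_member_pairs:
  fixes h :: "'a \<Rightarrow> 'a \<Rightarrow> 'b::{banach, second_countable_topology}"
  assumes "finite I" and "\<And>S. S \<in> set_pmf B \<Longrightarrow> S \<subseteq> I"
  shows "measure_pmf.expectation B (\<lambda>S. \<Sum>i\<in>S. \<Sum>j\<in>S. h i j)
    = (\<Sum>i\<in>I. \<Sum>j\<in>I. measure_pmf.prob B {S. i \<in> S \<and> j \<in> S} *\<^sub>R h i j)"
proof -
  have "measure_pmf.expectation B (\<lambda>S. \<Sum>i\<in>S. \<Sum>j\<in>S. h i j)
      = measure_pmf.expectation (map_pmf (\<lambda>S. S \<times> S) B) (\<lambda>T. \<Sum>ij\<in>T. case_prod h ij)"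
    by (simp add: sum.cartesian_product)
  also have "\<dots> = (\<Sum>ij\<in>I \<times> I. measure_pmf.prob (map_pmf (\<lambda>S. S \<times> S) B) {T. ij \<in> T} *\<^sub>R case_prod h ij)"
    using assms by (intro expectation_sum_members) auto
  also have "\<dots> = (\<Sum>(i, j)\<in>I \<times> I. measure_pmf.prob B {S. i \<in> S \<and> j \<in> S} *\<^sub>R h i j)"
    by (intro sum.cong refl) (auto simp: vimage_def)
  finally show ?thesis
    by (simp only: sum.cartesian_product)
qed

locale bucket_distribution =
  fixes B :: "nat set pmf" and I :: "nat set"
  assumes finite_I: "finite I"
    and bucket_subset: "S \<in> set_pmf B \<Longrightarrow> S \<subseteq> I"
    and bucket_nonempty: "S \<in> set_pmf B \<Longrightarrow> S \<noteq> {}"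
begin

lemma finite_bucket: "S \<in> set_pmf B \<Longrightarrow> finite S"
  using bucket_subset finite_I finite_subset by blast

lemma finite_set_pmf: "finite (set_pmf B)"
  using bucket_subset finite_I by (blast intro: finite_subset[of _ "Pow I"])

lemma finite_set_pmf_bucket_then_uniform: "finite (set_pmf (bucket_then_uniform B))"
proof -
  have "set_pmf (bucket_then_uniform B) \<subseteq> set_pmf B \<times> I"
    unfolding bucket_then_uniform_def
    using finite_bucket bucket_nonempty bucket_subset by auto
  then show ?thesis
    using finite_set_pmf finite_I finite_subset by blast
qed

lemma expectation_bucket_then_uniform:
  fixes g :: "nat set \<times> nat \<Rightarrow> 'b::{banach, second_countable_topology}"
  shows "measure_pmf.expectation (bucket_then_uniform B) g
    = measure_pmf.expectation B (\<lambda>S. (\<Sum>m\<in>S. g (S, m)) /\<^sub>R real (card S))"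
proof -
  have "measure_pmf.expectation (bucket_then_uniform B) g
      = (\<Sum>S\<in>set_pmf B. pmf B S *\<^sub>R measure_pmf.expectation (map_pmf (\<lambda>m. (S, m)) (pmf_of_set S)) g)"
    unfolding bucket_then_uniform_def
    by (rule pmf_expectation_bind) (use finite_set_pmf finite_bucket bucket_nonempty in auto)
  also have "\<dots> = (\<Sum>S\<in>set_pmf B. pmf B S *\<^sub>R ((\<Sum>m\<in>S. g (S, m)) /\<^sub>R real (card S)))"
    using finite_bucket bucket_nonempty by (intro sum.cong refl) (simp add: expectation_pmf_of_set)
  also have "\<dots> = measure_pmf.expectation B (\<lambda>S. (\<Sum>m\<in>S. g (S, m)) /\<^sub>R real (card S))"
    by (rule integral_measure_pmf[symmetric]) (use finite_set_pmf in auto)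
  finally show ?thesis .
qed

lemma expectation_bucket_estimator:
  fixes v :: "nat \<Rightarrow> 'b::{banach, second_countable_topology}"
  assumes Est: "\<And>S m. S \<in> set_pmf B \<Longrightarrow> m \<in> S \<Longrightarrow> Est (S, m) = real (card S) *\<^sub>R v m"
  shows "measure_pmf.expectation (bucket_then_uniform B) Est
    = (\<Sum>m\<in>I. measure_pmf.prob B {S. m \<in> S} *\<^sub>R v m)"
proof -
  have "measure_pmf.expectation (bucket_then_uniform B) Est
      = measure_pmf.expectation B (\<lambda>S. (\<Sum>m\<in>S. Est (S, m)) /\<^sub>R real (card S))"
    by (rule expectation_bucket_then_uniform)
  also have "\<dots> = measure_pmf.expectation B (\<lambda>S. \<Sum>m\<in>S. v m)"
  proof (intro integral_cong_AE AE_pmfI)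
    fix S assume S: "S \<in> set_pmf B"
    then have "real (card S) \<noteq> 0"
      using finite_bucket bucket_nonempty by auto
    then show "(\<Sum>m\<in>S. Est (S, m)) /\<^sub>R real (card S) = (\<Sum>m\<in>S. v m)"
      using S by (simp add: Est scaleR_sum_right[symmetric])
  qed simp_all
  also have "\<dots> = (\<Sum>m\<in>I. measure_pmf.prob B {S. m \<in> S} *\<^sub>R v m)"
    using finite_I bucket_subset by (rule expectation_sum_members)
  finally show ?thesis .
qed

lemma second_moment_bucket_estimator:
  fixes v :: "nat \<Rightarrow> 'b::real_normed_vector"
  assumes Est: "\<And>S m. S \<in> set_pmf B \<Longrightarrow> m \<in> S \<Longrightarrow> Est (S, m) = real (card S) *\<^sub>R v m"
  shows "measure_pmf.expectation (bucket_then_uniform B) (\<lambda>\<omega>. (norm (Est \<omega>))\<^sup>2)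
    = (\<Sum>i\<in>I. \<Sum>j\<in>I. measure_pmf.prob B {S. i \<in> S \<and> j \<in> S} * (norm (v i))\<^sup>2)"
proof -
  have "measure_pmf.expectation (bucket_then_uniform B) (\<lambda>\<omega>. (norm (Est \<omega>))\<^sup>2)
      = measure_pmf.expectation B (\<lambda>S. (\<Sum>m\<in>S. (norm (Est (S, m)))\<^sup>2) /\<^sub>R real (card S))"
    by (rule expectation_bucket_then_uniform)
  also have "\<dots> = measure_pmf.expectation B (\<lambda>S. \<Sum>i\<in>S. \<Sum>j\<in>S. (norm (v i))\<^sup>2)"
  proof (intro integral_cong_AE AE_pmfI)
    fix S assume S: "S \<in> set_pmf B"
    then have "real (card S) \<noteq> 0"
      using finite_bucket bucket_nonempty by auto
    moreover have "(\<Sum>m\<in>S. (norm (Est (S, m)))\<^sup>2) = real (card S) * (\<Sum>i\<in>S. \<Sum>j\<in>S. (norm (v i))\<^sup>2)"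
      using S by (simp add: Est power_mult_distrib sum_distrib_left power2_eq_square mult_ac)
    ultimately show "(\<Sum>m\<in>S. (norm (Est (S, m)))\<^sup>2) /\<^sub>R real (card S) = (\<Sum>i\<in>S. \<Sum>j\<in>S. (norm (v i))\<^sup>2)"
      by simp
  qed simp_all
  also have "\<dots> = (\<Sum>i\<in>I. \<Sum>j\<in>I. measure_pmf.prob B {S. i \<in> S \<and> j \<in> S} * (norm (v i))\<^sup>2)"
    using finite_I bucket_subset by (subst expectation_sum_member_pairs) auto
  finally show ?thesis .
qed

end

theorem theorem2:
  fixes N :: nat
    and x :: "nat \<Rightarrow> 'x"
    and f :: "'x \<Rightarrow> 'v::euclidean_space \<Rightarrow> real"
    and \<theta>t :: 'v
    and grad :: "nat \<Rightarrow> 'v"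
    and B :: "nat set pmf"
    and p :: "nat \<Rightarrow> real"
    and P2 :: "nat \<Rightarrow> nat \<Rightarrow> real"
    and Est :: "nat set \<times> nat \<Rightarrow> 'v"
  assumes grad: "\<And>i. i \<in> {1..N} \<Longrightarrow> (f (x i) has_derivative (\<lambda>h. grad i \<bullet> h)) (at \<theta>t)"
    and bucket: "\<And>S. S \<in> set_pmf B \<Longrightarrow> S \<subseteq> {1..N} \<and> S \<noteq> {}"
    and p_def: "\<And>i. p i = measure_pmf.prob B {S. i \<in> S}"
    and p_pos: "\<And>i. i \<in> {1..N} \<Longrightarrow> p i > 0"
    and P2_def: "\<And>i j. P2 i j = measure_pmf.prob B {S. i \<in> S \<and> j \<in> S}"
    and Est_def: "\<And>S m. Est (S, m) =
        (1 / real N) *\<^sub>R (\<Sum>i=1..N. ((if i \<in> S then 1 else 0) * (if i = m then 1 else 0)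
            * real (card S) / p i) *\<^sub>R grad i)"
  shows "trace_cov (bucket_then_uniform B) Est =
     (1 / (real N)^2) * (\<Sum>i=1..N. (norm (grad i))^2 * (\<Sum>j=1..N. P2 i j / p i) / p i)
     - (1 / (real N)^2) * (norm (\<Sum>i=1..N. grad i))^2"
proof -
  \<comment> \<open>The differentiability hypothesis only names grad i as a gradient; the identity holds for
    arbitrary vectors grad i.\<close>
  interpret bucket_distribution B "{1..N}"
    using bucket by unfold_locales auto
  define v where "v i = (1 / (real N * p i)) *\<^sub>R grad i" for i
  have Est_on_bucket: "Est (S, m) = real (card S) *\<^sub>R v m" if "S \<in> set_pmf B" "m \<in> S" for S m
  proof -
    have "(\<Sum>i=1..N. ((if i \<in> S then 1 else 0) * (if i = m then 1 else 0) * real (card S) / p i) *\<^sub>R grad i)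
        = (\<Sum>i=1..N. if i = m then (real (card S) / p m) *\<^sub>R grad m else 0)"
      using that by (intro sum.cong) auto
    moreover have "m \<in> {1..N}"
      using that bucket_subset by blast
    ultimately show ?thesis
      by (simp add: Est_def v_def)
  qed
  have "measure_pmf.expectation (bucket_then_uniform B) Est = (\<Sum>i=1..N. p i *\<^sub>R v i)"
    unfolding p_def by (rule expectation_bucket_estimator[OF Est_on_bucket])
  also have "\<dots> = (1 / real N) *\<^sub>R (\<Sum>i=1..N. grad i)"
    unfolding scaleR_sum_right using p_pos by (intro sum.cong) (auto simp: v_def less_imp_neq[symmetric])
  finally have mean: "measure_pmf.expectation (bucket_then_uniform B) Est
      = (1 / real N) *\<^sub>R (\<Sum>i=1..N. grad i)" .
  have "measure_pmf.expectation (bucket_then_uniform B) (\<lambda>\<omega>. (norm (Est \<omega>))\<^sup>2)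
      = (\<Sum>i=1..N. \<Sum>j=1..N. P2 i j * (norm (v i))\<^sup>2)"
    unfolding P2_def by (rule second_moment_bucket_estimator[OF Est_on_bucket])
  also have "\<dots> = (1 / (real N)\<^sup>2) * (\<Sum>i=1..N. (norm (grad i))\<^sup>2 * (\<Sum>j=1..N. P2 i j / p i) / p i)"
    using p_pos by (simp add: v_def sum_distrib_left sum_distrib_right sum_divide_distrib
        power_divide power_mult_distrib power2_eq_square field_simps)
  finally have second_moment: "measure_pmf.expectation (bucket_then_uniform B) (\<lambda>\<omega>. (norm (Est \<omega>))\<^sup>2)
      = (1 / (real N)\<^sup>2) * (\<Sum>i=1..N. (norm (grad i))\<^sup>2 * (\<Sum>j=1..N. P2 i j / p i) / p i)" .
  show ?thesis
    unfolding trace_cov_eq_second_moment_minus_mean[OF finite_set_pmf_bucket_then_uniform]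
      mean second_moment by (simp add: power_divide)
qed

end
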